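(* Let $(\mathrm{G},\mu)$ be a Lorentzian flat Lie group which admits a timelike left-invariant Killing vector field. Then $\mathrm{G}$ is 2-solvable (i.e. the derived algebra $[\mathfrak{g},\mathfrak{g}]$ of its Lie algebra $\mathfrak{g}$ is abelian) and unimodular, and hence $(\mathrm{G},\mu)$ is geodesically complete.
   Context: A Lorentzian flat Lie group is a connected Lie group $\mathrm{G}$ endowed with a left-invariant flat pseudo-Riemannian metric $\mu$ of signature $(-,+,\dots,+)$. A vector field $X$ is timelike if $\mu(X,X)<0$ everywhere, and Killing if the flow of $X$ preserves $\mu$. *)

theory Defs
  imports "HOL-Analysis.Analysis"
begin

definition lie_algebra :: "('a::euclidean_space \<Rightarrow> 'a \<Rightarrow> 'a) \<Rightarrow> bool" where
  "lie_algebra br \<longleftrightarrow> bilinear br \<and> (\<forall>u v. br u v = - br v u) \<and>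
     (\<forall>u v w. br u (br v w) + br v (br w u) + br w (br u v) = 0)"

text \<open>Lorentzian scalar product: symmetric bilinear form of signature (-,+,...,+).\<close>
definition lorentzian_form :: "('a::euclidean_space \<Rightarrow> 'a \<Rightarrow> real) \<Rightarrow> bool" where
  "lorentzian_form m \<longleftrightarrow> bilinear m \<and> (\<forall>u v. m u v = m v u) \<and>
     (\<exists>e. m e e = -1 \<and> (\<forall>v. m e v = 0 \<and> v \<noteq> 0 \<longrightarrow> m v v > 0))"

text \<open>Levi-Civita product of the left-invariant metric: u.v = nabla_u v on left-invariant fields
  (torsion free and metric; it is uniquely determined by these conditions).\<close>
definition levi_civita_product ::
  "('a::euclidean_space \<Rightarrow> 'a \<Rightarrow> 'a) \<Rightarrow> ('a \<Rightarrow> 'a \<Rightarrow> real) \<Rightarrow> ('a \<Rightarrow> 'a \<Rightarrow> 'a) \<Rightarrow> bool" where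
  "levi_civita_product br m p \<longleftrightarrow> bilinear p \<and>
     (\<forall>u v. p u v - p v u = br u v) \<and>
     (\<forall>u v w. m (p u v) w + m v (p u w) = 0)"

definition flat_product :: "('a::euclidean_space \<Rightarrow> 'a \<Rightarrow> 'a) \<Rightarrow> ('a \<Rightarrow> 'a \<Rightarrow> 'a) \<Rightarrow> bool" where
  "flat_product br p \<longleftrightarrow> (\<forall>u v w. p (br u v) w = p u (p v w) - p v (p u w))"

definition killing_vector ::
  "('a::euclidean_space \<Rightarrow> 'a \<Rightarrow> real) \<Rightarrow> ('a \<Rightarrow> 'a \<Rightarrow> 'a) \<Rightarrow> 'a \<Rightarrow> bool" where
  "killing_vector m p u \<longleftrightarrow> (\<forall>v w. m (p v u) w + m v (p w u) = 0)"

definition two_solvable :: "('a \<Rightarrow> 'a \<Rightarrow> 'a::euclidean_space) \<Rightarrow> bool" where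
  "two_solvable br \<longleftrightarrow> (\<forall>a b c d. br (br a b) (br c d) = 0)"

text \<open>Unimodular (connected group): tr(ad x) = 0 for all x.\<close>
definition unimodular :: "('a \<Rightarrow> 'a \<Rightarrow> 'a::euclidean_space) \<Rightarrow> bool" where
  "unimodular br \<longleftrightarrow> (\<forall>x. (\<Sum>b\<in>Basis. br x b \<bullet> b) = 0)"

text \<open>Geodesic completeness of a left-invariant metric: every solution of the
  Euler-Arnold equation c' = - c.c (the left-translated geodesic equation) exists for all time.\<close>
definition geodesically_complete :: "('a::euclidean_space \<Rightarrow> 'a \<Rightarrow> 'a) \<Rightarrow> bool" where
  "geodesically_complete p \<longleftrightarrow>
     (\<forall>c0. \<exists>c::real \<Rightarrow> 'a. c 0 = c0 \<and> (\<forall>t. (c has_vector_derivative (- p (c t) (c t))) (at t)))"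

end

theory Submission
  imports Defs
begin

text \<open>A left-invariant Killing field \<open>u\<close> of a flat metric has vanishing second covariant
  derivative, \<open>\<nabla>\<^sub>x\<nabla>\<^sub>y u = \<nabla>\<^bsub>\<nabla>\<^sub>x y\<^esub> u\<close>; when \<open>u\<close> is timelike this forces \<open>\<nabla>u = 0\<close>.
  Reversing the sign of the metric along \<open>u\<close> then yields a left-invariant Riemannian metric
  with the same flat Levi-Civita product \<open>x \<cdot> y\<close>, so Milnor's analysis of flat Riemannian Lie
  groups applies and gives \<open>(x \<cdot> y) \<cdot> z = 0\<close>. Everything follows from this identity:
  left multiplication by a bracket is zero, so \<open>[\<g>,\<g>]\<close> is abelian; left and right
  multiplications are traceless, so \<open>tr ad\<^sub>x = 0\<close>; and the left multiplication by \<open>c(t)\<close> is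
  constant along solutions of the linear equation \<open>c' = - c(0) \<cdot> c\<close>, which are therefore
  geodesics defined for all time.\<close>

lemmas bilinear_simps =
  bilinear_ladd bilinear_radd bilinear_lmul bilinear_rmul bilinear_lneg bilinear_rneg
  bilinear_lzero bilinear_rzero bilinear_lsub bilinear_rsub

lemma bilinear_linear_left: "bilinear h \<Longrightarrow> linear (\<lambda>x. h x y)"
  by (simp add: bilinear_def)

lemma bilinear_linear_right: "bilinear h \<Longrightarrow> linear (h x)"
  by (simp add: bilinear_def)

lemma bilinear_sum_scaleR_left:
  "bilinear h \<Longrightarrow> h (\<Sum>i\<in>I. c i *\<^sub>R f i) y = (\<Sum>i\<in>I. c i *\<^sub>R h (f i) y)"
  by (simp add: linear_sum[OF bilinear_linear_left] linear_scale[OF bilinear_linear_left])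

lemma bilinear_sum_scaleR_right:
  "bilinear h \<Longrightarrow> h x (\<Sum>i\<in>I. c i *\<^sub>R f i) = (\<Sum>i\<in>I. c i *\<^sub>R h x (f i))"
  by (simp add: linear_sum[OF bilinear_linear_right] linear_scale[OF bilinear_linear_right])

section \<open>Parseval frames\<close>

definition parseval_frame :: "('a::real_vector \<Rightarrow> 'a \<Rightarrow> real) \<Rightarrow> 'a set \<Rightarrow> 'a set \<Rightarrow> bool" where
  "parseval_frame q W E \<longleftrightarrow> finite E \<and> E \<subseteq> W \<and> (\<forall>y\<in>W. y = (\<Sum>e\<in>E. q e y *\<^sub>R e))"

lemma parseval_frame_expansion: "parseval_frame q W E \<Longrightarrow> y \<in> W \<Longrightarrow> y = (\<Sum>e\<in>E. q e y *\<^sub>R e)"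
  by (simp add: parseval_frame_def)

lemma parseval_frame_linear_eq_0:
  assumes "parseval_frame q W E" "linear f" "\<And>e. e \<in> E \<Longrightarrow> f e = 0" "y \<in> W"
  shows "f y = 0"
proof -
  have "f y = f (\<Sum>e\<in>E. q e y *\<^sub>R e)"
    using parseval_frame_expansion[OF assms(1,4)] by (rule arg_cong)
  also have "\<dots> = (\<Sum>e\<in>E. q e y *\<^sub>R f e)"
    by (simp add: linear_sum[OF assms(2)] linear_scale[OF assms(2)])
  finally show ?thesis
    using assms(3) by simp
qed

lemma parseval_frame_insert:
  fixes q :: "'a::real_vector \<Rightarrow> 'a \<Rightarrow> real"
  assumes q: "bilinear q" "\<And>x y. q x y = q y x" and W: "subspace W"
    and f: "f \<in> W" "q f f = 1" and F: "parseval_frame q {y \<in> W. q f y = 0} F"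
  shows "parseval_frame q W (insert f F)"
proof -
  have F_orth: "q g f = 0" if "g \<in> F" for g
    using F that q(2) by (auto simp: parseval_frame_def)
  have "f \<notin> F"
    using F_orth f(2) by force
  have "y = (\<Sum>g\<in>insert f F. q g y *\<^sub>R g)" if y: "y \<in> W" for y
  proof -
    have "y - q f y *\<^sub>R f \<in> {y \<in> W. q f y = 0}"
      using y f W by (auto simp: subspace_diff subspace_scale bilinear_simps[OF q(1)])
    then have "y - q f y *\<^sub>R f = (\<Sum>g\<in>F. q g (y - q f y *\<^sub>R f) *\<^sub>R g)"
      using F parseval_frame_expansion by blast
    also have "\<dots> = (\<Sum>g\<in>F. q g y *\<^sub>R g)"
      using F_orth by (simp add: bilinear_simps[OF q(1)])
    finally show ?thesis
      using F \<open>f \<notin> F\<close> by (simp add: parseval_frame_def algebra_simps)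
  qed
  then show ?thesis
    using F f by (auto simp: parseval_frame_def)
qed

lemma parseval_frame_exists:
  fixes q :: "'a::euclidean_space \<Rightarrow> 'a \<Rightarrow> real"
  assumes q: "bilinear q" "\<And>x y. q x y = q y x"
    and "subspace W" and "\<And>x. x \<in> W \<Longrightarrow> x \<noteq> 0 \<Longrightarrow> q x x > 0"
  shows "\<exists>E. parseval_frame q W E"
  using assms(3,4)
proof (induction "dim W" arbitrary: W rule: less_induct)
  case less
  show ?case
  proof (cases "W \<subseteq> {0}")
    case True
    then show ?thesis
      by (intro exI[of _ "{}"]) (auto simp: parseval_frame_def)
  next
    case False
    then obtain v where v: "v \<in> W" "v \<noteq> 0"
      by auto
    then have "q v v > 0"
      using less.prems by blast
    define f where "f = (1 / sqrt (q v v)) *\<^sub>R v"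
    have f: "f \<in> W" "q f f = 1"
      using less.prems(1) v(1) \<open>q v v > 0\<close>
      by (auto simp: f_def subspace_scale bilinear_simps[OF q(1)] real_sqrt_mult[symmetric]
          power2_eq_square[symmetric])
    define W' where "W' = {y \<in> W. q f y = 0}"
    have "subspace W'"
      using less.prems(1) by (auto simp: W'_def subspace_def bilinear_simps[OF q(1)])
    moreover have "dim W' < dim W"
    proof (rule dim_psubset)
      have "W' \<subset> W"
        using f unfolding W'_def by force
      then show "span W' \<subset> span W"
        using \<open>subspace W'\<close> less.prems(1) by (simp add: span_eq_iff[THEN iffD2])
    qed
    ultimately obtain F where "parseval_frame q W' F"
      using less.hyps less.prems(2) by (auto simp: W'_def)
    then show ?thesis
      using parseval_frame_insert[OF q less.prems(1) f] by (auto simp: W'_def)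
  qed
qed

lemma parseval_frame_skew_sum:
  fixes q :: "'a::real_vector \<Rightarrow> 'a \<Rightarrow> real" and \<phi> :: "'a \<Rightarrow> 'a \<Rightarrow> 'b::real_vector"
  assumes q_sym: "\<And>x y. q x y = q y x" and E: "parseval_frame q W E"
    and A_into: "\<And>e. e \<in> E \<Longrightarrow> A e \<in> W"
    and A_skew: "\<And>a b. a \<in> W \<Longrightarrow> b \<in> W \<Longrightarrow> q (A a) b = - q a (A b)"
    and \<phi>: "bilinear \<phi>"
  shows "(\<Sum>e\<in>E. \<phi> (A e) e + \<phi> e (A e)) = 0"
proof -
  have EW: "E \<subseteq> W"
    using E by (simp add: parseval_frame_def)
  have expand: "A e = (\<Sum>g\<in>E. q g (A e) *\<^sub>R g)" if "e \<in> E" for e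
    using parseval_frame_expansion[OF E A_into[OF that]] .
  have "(\<Sum>e\<in>E. \<phi> e (A e)) = (\<Sum>e\<in>E. \<Sum>g\<in>E. q g (A e) *\<^sub>R \<phi> e g)"
    by (intro sum.cong refl) (subst expand, simp_all add: bilinear_sum_scaleR_right[OF \<phi>])
  also have "\<dots> = (\<Sum>g\<in>E. \<Sum>e\<in>E. q g (A e) *\<^sub>R \<phi> e g)"
    by (rule sum.swap)
  also have "\<dots> = (\<Sum>g\<in>E. \<Sum>e\<in>E. - (q e (A g) *\<^sub>R \<phi> e g))"
  proof (intro sum.cong refl)
    fix g e
    assume "g \<in> E" "e \<in> E"
    then have "q g (A e) = - q e (A g)"
      using A_skew[of e g] q_sym[of g "A e"] EW by (metis subsetD)
    then show "q g (A e) *\<^sub>R \<phi> e g = - (q e (A g) *\<^sub>R \<phi> e g)"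
      by simp
  qed
  also have "\<dots> = - (\<Sum>g\<in>E. \<Sum>e\<in>E. q e (A g) *\<^sub>R \<phi> e g)"
    by (simp add: sum_negf)
  also have "\<dots> = - (\<Sum>e\<in>E. \<phi> (A e) e)"
  proof -
    have "\<phi> (A g) g = (\<Sum>e\<in>E. q e (A g) *\<^sub>R \<phi> e g)" if "g \<in> E" for g
      by (subst expand[OF that]) (simp add: bilinear_sum_scaleR_left[OF \<phi>])
    then show ?thesis
      by (intro arg_cong[where f=uminus] sum.cong) auto
  qed
  finally show ?thesis
    by (simp add: sum.distrib)
qed

lemma trace_parseval_frame:
  fixes f :: "'a::euclidean_space \<Rightarrow> 'a"
  assumes "linear f" "bilinear q" "parseval_frame q UNIV E"
  shows "(\<Sum>b\<in>Basis. f b \<bullet> b) = (\<Sum>e\<in>E. q e (f e))"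
proof -
  have "(\<Sum>b\<in>Basis. f b \<bullet> b) = (\<Sum>b\<in>Basis. \<Sum>e\<in>E. q e (f b) * (e \<bullet> b))"
    by (subst parseval_frame_expansion[OF assms(3)]) (simp_all add: inner_sum_left)
  also have "\<dots> = (\<Sum>e\<in>E. \<Sum>b\<in>Basis. (e \<bullet> b) *\<^sub>R q e (f b))"
    by (subst sum.swap) (simp add: mult.commute)
  also have "\<dots> = (\<Sum>e\<in>E. q e (f e))"
  proof (intro sum.cong refl)
    fix e
    have "f e = f (\<Sum>b\<in>Basis. (e \<bullet> b) *\<^sub>R b)"
      by (simp add: euclidean_representation)
    also have "\<dots> = (\<Sum>b\<in>Basis. (e \<bullet> b) *\<^sub>R f b)"
      by (simp add: linear_sum[OF assms(1)] linear_scale[OF assms(1)])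
    finally show "(\<Sum>b\<in>Basis. (e \<bullet> b) *\<^sub>R q e (f b)) = q e (f e)"
      by (simp add: bilinear_sum_scaleR_right[OF assms(2)])
  qed
  finally show ?thesis .
qed

lemma trace_comp_commute:
  fixes f g :: "'a::euclidean_space \<Rightarrow> 'a"
  assumes "linear f" "linear g"
  shows "(\<Sum>b\<in>Basis. f (g b) \<bullet> b) = (\<Sum>b\<in>Basis. g (f b) \<bullet> b)"
proof -
  have comp: "h (k b) \<bullet> b = (\<Sum>c\<in>Basis. (k b \<bullet> c) * (h c \<bullet> b))" if "linear h" for h k :: "'a \<Rightarrow> 'a" and b
    by (subst euclidean_representation[symmetric, of "k b"])
      (simp add: linear_sum[OF that] linear_scale[OF that] inner_sum_left)
  show ?thesis
    by (simp add: comp assms) (subst sum.swap, simp add: mult.commute)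
qed


section \<open>Linear differential equations\<close>

lemma summable_linear_exp_series:
  fixes A :: "'a::euclidean_space \<Rightarrow> 'a"
  assumes "linear A"
  shows "summable (\<lambda>n. ((A ^^ n) x \<bullet> y) / fact n * t ^ n)"
proof -
  obtain K where K: "K > 0" "\<And>x. norm (A x) \<le> K * norm x"
    using linear_bounded_pos[OF assms] by blast
  have iterate_bound: "norm ((A ^^ n) x) \<le> K ^ n * norm x" for n
  proof (induction n)
    case (Suc n)
    have "norm ((A ^^ Suc n) x) \<le> K * norm ((A ^^ n) x)"
      using K(2) by simp
    also have "\<dots> \<le> K * (K ^ n * norm x)"
      using Suc K(1) by simp
    finally show ?case
      by simp
  qed simp
  show ?thesis
  proof (rule summable_comparison_test)
    show "summable (\<lambda>n. norm y * norm x * (inverse (fact n) * (K * \<bar>t\<bar>) ^ n))"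
      by (intro summable_mult summable_exp)
    show "\<exists>N. \<forall>n\<ge>N. norm (((A ^^ n) x \<bullet> y) / fact n * t ^ n)
        \<le> norm y * norm x * (inverse (fact n) * (K * \<bar>t\<bar>) ^ n)"
    proof (intro exI allI impI)
      fix n :: nat
      have "\<bar>(A ^^ n) x \<bullet> y\<bar> \<le> norm y * (K ^ n * norm x)"
        using Cauchy_Schwarz_ineq2[of "(A ^^ n) x" y] iterate_bound[of n]
        by (smt (verit, best) mult.commute mult_left_mono norm_ge_zero)
      then have "\<bar>(A ^^ n) x \<bullet> y\<bar> * \<bar>t\<bar> ^ n \<le> norm y * (K ^ n * norm x) * \<bar>t\<bar> ^ n"
        by (simp add: mult_right_mono)
      then show "norm (((A ^^ n) x \<bullet> y) / fact n * t ^ n)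
          \<le> norm y * norm x * (inverse (fact n) * (K * \<bar>t\<bar>) ^ n)"
        by (simp add: abs_mult power_abs power_mult_distrib divide_right_mono field_simps)
    qed
  qed
qed

text \<open>The solution is \<open>exp (t A) c0\<close>, built coordinatewise from scalar power series; the
  adjoint of \<open>A\<close> expresses the termwise derivative of \<open>\<langle>exp (t A) c0, y\<rangle>\<close>.\<close>
lemma linear_ode_solvable:
  fixes A :: "'a::euclidean_space \<Rightarrow> 'a"
  assumes lin: "linear A"
  shows "\<exists>c. c 0 = c0 \<and> (\<forall>t. (c has_vector_derivative A (c t)) (at t))"
proof -
  define v where "v n = (A ^^ n) c0" for n
  have summable: "summable (\<lambda>n. (v n \<bullet> y) / fact n * t ^ n)" for y t
    unfolding v_def by (rule summable_linear_exp_series[OF lin])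
  define c where "c t = (\<Sum>b\<in>Basis. (\<Sum>n. (v n \<bullet> b) / fact n * t ^ n) *\<^sub>R b)" for t
  have c_inner: "c t \<bullet> y = (\<Sum>n. (v n \<bullet> y) / fact n * t ^ n)" for t y
  proof -
    have "(\<Sum>n. (v n \<bullet> y) / fact n * t ^ n)
        = (\<Sum>n. \<Sum>b\<in>Basis. (y \<bullet> b) * ((v n \<bullet> b) / fact n * t ^ n))"
      by (simp add: euclidean_inner[of "v _" y] sum_divide_distrib sum_distrib_left mult_ac)
    also have "\<dots> = (\<Sum>b\<in>Basis. \<Sum>n. (y \<bullet> b) * ((v n \<bullet> b) / fact n * t ^ n))"
      by (rule suminf_sum) (intro summable_mult summable)
    also have "\<dots> = (\<Sum>b\<in>Basis. (y \<bullet> b) * (\<Sum>n. (v n \<bullet> b) / fact n * t ^ n))"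
      by (intro sum.cong refl suminf_mult summable)
    also have "\<dots> = c t \<bullet> y"
      by (simp add: c_def inner_sum_left inner_commute[of y] mult.commute)
    finally show ?thesis ..
  qed
  have "((\<lambda>t. c t \<bullet> y) has_real_derivative A (c t) \<bullet> y) (at t)" for t y
  proof -
    have diffs: "diffs (\<lambda>n. (v n \<bullet> y) / fact n) = (\<lambda>n. (v n \<bullet> adjoint A y) / fact n)"
      by (simp add: fun_eq_iff diffs_def v_def adjoint_works[OF lin] fact_Suc del: of_nat_Suc)
    have "((\<lambda>t. \<Sum>n. (v n \<bullet> y) / fact n * t ^ n) has_real_derivative
        (\<Sum>n. diffs (\<lambda>n. (v n \<bullet> y) / fact n) n * t ^ n)) (at t)"
      by (rule termdiffs_strong_converges_everywhere) (rule summable)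
    then have "((\<lambda>t. c t \<bullet> y) has_real_derivative c t \<bullet> adjoint A y) (at t)"
      unfolding diffs c_inner .
    then show ?thesis
      by (simp add: adjoint_works[OF lin])
  qed
  then have "(c has_vector_derivative A (c t)) (at t)" for t
    unfolding has_vector_derivative_def
    by (subst has_derivative_componentwise_within)
      (simp add: has_field_derivative_def mult_commute_abs)
  moreover have "c 0 = c0"
  proof (rule euclidean_eqI)
    show "c 0 \<bullet> b = c0 \<bullet> b" for b
      unfolding c_inner powser_zero by (simp add: v_def)
  qed
  ultimately show ?thesis
    by blast
qed


section \<open>Lorentzian forms and timelike Killing fields\<close>

lemma lorentzian_formD:
  assumes "lorentzian_form m"
  shows lorentzian_form_bilinear: "bilinear m" and lorentzian_form_sym: "m x y = m y x"
  using assms by (auto simp: lorentzian_form_def)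

lemma lorentzian_orthogonal_timelike:
  assumes m: "lorentzian_form m" and t: "m t t < 0" and vt: "m v t = 0" and "v \<noteq> 0"
  shows "m v v > 0"
proof (rule ccontr)
  assume "\<not> m v v > 0"
  then have vv: "m v v \<le> 0"
    by simp
  obtain e where e: "m e e = -1" "\<And>w. m e w = 0 \<Longrightarrow> w \<noteq> 0 \<Longrightarrow> m w w > 0"
    using m by (auto simp: lorentzian_form_def)
  note m_simps = bilinear_simps[OF lorentzian_form_bilinear[OF m]]
  have tv: "m t v = 0"
    using vt lorentzian_form_sym[OF m] by metis
  text \<open>The vector \<open>z\<close> of the plane spanned by \<open>t\<close> and \<open>v\<close> orthogonal to \<open>e\<close> would be
    spacelike with \<open>m z z \<le> 0\<close>.\<close>
  define \<alpha> \<beta> where "\<alpha> = m v e" and "\<beta> = - m t e"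
  define z where "z = \<alpha> *\<^sub>R t + \<beta> *\<^sub>R v"
  have "m e z = 0"
    using lorentzian_form_sym[OF m, of e] by (simp add: z_def \<alpha>_def \<beta>_def m_simps)
  moreover have "m z z = \<alpha> * \<alpha> * m t t + \<beta> * \<beta> * m v v"
    using vt tv by (simp add: z_def m_simps algebra_simps)
  then have "m z z \<le> 0"
    using t vv by (simp add: add_nonpos_nonpos mult_nonneg_nonpos)
  ultimately have z: "z = 0"
    using e(2) by force
  show False
  proof (cases "\<beta> = 0")
    case True
    then have "m e t = 0"
      using lorentzian_form_sym[OF m, of e t] by (simp add: \<beta>_def)
    moreover have "t \<noteq> 0"
      using t by (auto simp: m_simps)
    ultimately show False
      using e(2) t by force
  next
    case False
    have "\<alpha> * m t t = m z t"
      using vt by (simp add: z_def m_simps)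
    then have "\<alpha> = 0"
      using z t by (simp add: m_simps)
    then have "\<beta> *\<^sub>R v = 0"
      using z unfolding z_def by simp
    then show False
      using False \<open>v \<noteq> 0\<close> by simp
  qed
qed

lemma lorentzian_nondegenerate:
  assumes m: "lorentzian_form m" and z: "\<And>y. m z y = 0"
  shows "z = 0"
proof (rule ccontr)
  obtain e where "m e e = -1"
    using m by (auto simp: lorentzian_form_def)
  moreover assume "z \<noteq> 0"
  ultimately have "m z z > 0"
    using lorentzian_orthogonal_timelike[OF m, of e z] z by simp
  then show False
    using z[of z] by simp
qed

lemma flat_killing_second_derivative:
  assumes m: "bilinear m" "\<And>x y. m x y = m y x" "\<And>z. (\<And>y. m z y = 0) \<Longrightarrow> z = 0"
    and lc: "levi_civita_product br m p" and flat: "flat_product br p"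
    and u: "killing_vector m p u"
  shows "p x (p y u) = p (p x y) u"
proof -
  have p: "bilinear p" and torsion: "\<And>a b. p a b - p b a = br a b"
    and metric: "\<And>a b c. m (p a b) c + m b (p a c) = 0"
    using lc by (auto simp: levi_civita_product_def)
  have killing: "\<And>v w. m (p v u) w + m v (p w u) = 0"
    using u by (simp add: killing_vector_def)
  note m_simps = bilinear_simps[OF m(1)] and p_simps = bilinear_simps[OF p]
  define T where "T w v z = m (p w (p v u) - p (p w v) u) z" for w v z
  have T_sym: "T w v z = T v w z" for w v z
  proof -
    have "p w (p v u) - p v (p w u) = p (br w v) u"
      using flat by (simp add: flat_product_def)
    also have "\<dots> = p (p w v) u - p (p v w) u"
      by (simp add: p_simps flip: torsion)
    finally have "p w (p v u) - p (p w v) u = p v (p w u) - p (p v w) u"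
      by (simp add: algebra_simps)
    then show ?thesis
      by (simp add: T_def)
  qed
  have T_skew: "T w v z = - T w z v" for w v z
    using metric[of w "p v u" z] killing[of "p w v" z] metric[of w "p z u" v] killing[of "p w z" v]
      m(2)[of "p v u" "p w z"] m(2)[of "p z u" "p w v"]
    by (simp add: T_def m_simps)
  text \<open>Symmetric in the first two and skew in the last two arguments, \<open>T\<close> vanishes.\<close>
  have T_zero: "T x y z = 0" for z
  proof -
    have "T x y z = - T x z y"
      by (rule T_skew)
    also have "\<dots> = - T z x y"
      by (simp add: T_sym)
    also have "\<dots> = T z y x"
      by (simp add: T_skew[of z x y])
    also have "\<dots> = T y z x"
      by (simp add: T_sym)
    also have "\<dots> = - T y x z"
      by (rule T_skew)
    also have "\<dots> = - T x y z"
      by (simp add: T_sym)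
    finally show ?thesis
      by simp
  qed
  have "p x (p y u) - p (p x y) u = 0"
    by (rule m(3)) (use T_zero in \<open>simp add: T_def\<close>)
  then show ?thesis
    by simp
qed

lemma timelike_killing_parallel:
  assumes m: "lorentzian_form m" and lc: "levi_civita_product br m p" and flat: "flat_product br p"
    and u: "killing_vector m p u" "m u u < 0"
  shows "p x u = 0"
proof (rule ccontr)
  assume nonzero: "p x u \<noteq> 0"
  have p: "bilinear p" and metric: "\<And>a b c. m (p a b) c + m b (p a c) = 0"
    using lc by (auto simp: levi_civita_product_def)
  have killing: "\<And>v w. m (p v u) w + m v (p w u) = 0"
    using u by (simp add: killing_vector_def)
  have sym: "\<And>x y. m x y = m y x"
    by (rule lorentzian_form_sym[OF m])
  have perp: "m (p y u) u = 0" for y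
    using metric[of y u u] sym[of u "p y u"] by simp
  have "p u u = 0"
  proof (rule lorentzian_nondegenerate[OF m])
    show "m (p u u) y = 0" for y
      using killing[of u y] perp[of y] sym[of u "p y u"] by simp
  qed
  then have "p (p x u) u = 0"
    using flat_killing_second_derivative[OF lorentzian_form_bilinear[OF m] sym
        lorentzian_nondegenerate[OF m] lc flat u(1), of x u]
    by (simp add: bilinear_simps[OF p])
  then have "m (p x u) (p x u) = 0"
    using killing[of x "p x u"] by (simp add: bilinear_simps[OF lorentzian_form_bilinear[OF m]])
  moreover have "m (p x u) (p x u) > 0"
    using lorentzian_orthogonal_timelike[OF m u(2) perp nonzero] .
  ultimately show False
    by simp
qed

lemma unit_timelike_parallel_exists:
  assumes m: "lorentzian_form m" and lc: "levi_civita_product br m p" and flat: "flat_product br p"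
    and "\<exists>u. m u u < 0 \<and> killing_vector m p u"
  shows "\<exists>n. m n n = -1 \<and> (\<forall>x. p x n = 0)"
proof -
  obtain u where u: "m u u < 0" "killing_vector m p u"
    using assms(4) by blast
  define n where "n = (1 / sqrt (- m u u)) *\<^sub>R u"
  have "m n n = -1"
    using u(1) by (simp add: n_def bilinear_simps[OF lorentzian_form_bilinear[OF m]]
        real_sqrt_mult[symmetric] power2_eq_square[symmetric])
  moreover have "p x n = 0" for x
    using timelike_killing_parallel[OF m lc flat u(2,1)] lc
    by (simp add: n_def levi_civita_product_def bilinear_rmul)
  ultimately show ?thesis
    by blast
qed

text \<open>Reversing the sign of \<open>m\<close> on the direction of a unit timelike vector \<open>n\<close> gives a
  Riemannian metric.\<close>
definition flip_timelike :: "('a \<Rightarrow> 'a \<Rightarrow> real) \<Rightarrow> 'a \<Rightarrow> 'a \<Rightarrow> 'a \<Rightarrow> real" where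
  "flip_timelike m n x y = m x y + 2 * m x n * m y n"

lemma flip_timelike_bilinear:
  assumes "bilinear m"
  shows "bilinear (flip_timelike m n)"
  unfolding bilinear_def flip_timelike_def
  by (auto intro!: linearI simp: bilinear_simps[OF assms] algebra_simps)

lemma flip_timelike_sym: "(\<And>x y. m x y = m y x) \<Longrightarrow> flip_timelike m n x y = flip_timelike m n y x"
  by (simp add: flip_timelike_def mult.commute)

lemma flip_timelike_pos:
  assumes m: "lorentzian_form m" and n: "m n n = -1" and "x \<noteq> 0"
  shows "flip_timelike m n x x > 0"
proof -
  note m_simps = bilinear_simps[OF lorentzian_form_bilinear[OF m]]
  define c where "c = m x n"
  define x' where "x' = x + c *\<^sub>R n"
  have x'n: "m x' n = 0" and nx': "m n x' = 0"
    using lorentzian_form_sym[OF m, of n x'] by (simp_all add: x'_def c_def m_simps n)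
  have "x = x' - c *\<^sub>R n"
    by (simp add: x'_def)
  then have "m x x = m x' x' - c * c"
    by (simp add: m_simps x'n nx' n)
  then have "flip_timelike m n x x = m x' x' + c * c"
    by (simp add: flip_timelike_def flip: c_def)
  moreover have "m x' x' + c * c > 0"
  proof (cases "x' = 0")
    case True
    then have "c \<noteq> 0"
      using \<open>x \<noteq> 0\<close> by (auto simp: x'_def)
    then have "c * c > 0"
      by (metis not_real_square_gt_zero)
    with True show ?thesis
      by (simp add: m_simps)
  next
    case False
    then have "m x' x' > 0"
      using lorentzian_orthogonal_timelike[OF m _ x'n] n by simp
    then show ?thesis
      by (simp add: add_pos_nonneg)
  qed
  ultimately show ?thesis
    by simp
qed

lemma levi_civita_product_flip_timelike:
  assumes lc: "levi_civita_product br m p" and m: "bilinear m" and n: "\<And>x. p x n = 0"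
  shows "levi_civita_product br (flip_timelike m n) p"
proof -
  have metric: "m (p a b) c + m b (p a c) = 0" for a b c
    using lc by (simp add: levi_civita_product_def)
  have n_perp: "m (p a b) n = 0" for a b
    using metric[of a b n] n by (simp add: bilinear_simps[OF m])
  show ?thesis
    unfolding levi_civita_product_def
  proof (intro conjI allI)
    show "bilinear p" "p a b - p b a = br a b" for a b
      using lc by (auto simp: levi_civita_product_def)
    show "flip_timelike m n (p a b) c + flip_timelike m n b (p a c) = 0" for a b c
      using metric[of a b c] n_perp[of a b] n_perp[of a c] by (simp add: flip_timelike_def)
  qed
qed


section \<open>Flat left-invariant Riemannian metrics\<close>

text \<open>\<open>E\<close> is an auxiliary \<open>q\<close>-Parseval frame of the whole space, used to express traces.\<close>
locale flat_riemannian =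
  fixes q :: "'a::euclidean_space \<Rightarrow> 'a \<Rightarrow> real" and br p :: "'a \<Rightarrow> 'a \<Rightarrow> 'a" and E :: "'a set"
  assumes q_bilinear: "bilinear q" and q_sym: "q x y = q y x" and q_pos: "x \<noteq> 0 \<Longrightarrow> q x x > 0"
    and levi_civita: "levi_civita_product br q p" and flat: "flat_product br p"
    and frame: "parseval_frame q UNIV E"
begin

lemma p_bilinear: "bilinear p"
  and torsion_free: "p a b - p b a = br a b"
  and p_metric: "q (p a b) c + q b (p a c) = 0"
  using levi_civita by (auto simp: levi_civita_product_def)

lemma p_flat: "p (br a b) c = p a (p b c) - p b (p a c)"
  using flat by (simp add: flat_product_def)

lemmas q_simps = bilinear_simps[OF q_bilinear]
lemmas p_simps = bilinear_simps[OF p_bilinear]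

lemma q_self_eq_0_iff [simp]: "q x x = 0 \<longleftrightarrow> x = 0"
  using q_pos[of x] by (cases "x = 0") (auto simp: q_simps)

lemma q_self_nonneg: "q x x \<ge> 0"
  using q_pos[of x] by (cases "x = 0") (auto simp: q_simps)

lemma q_p_self: "q (p a b) b = 0"
  using p_metric[of a b b] q_sym[of b "p a b"] by simp

definition left_kernel :: "'a set" where
  "left_kernel = {a. \<forall>y. p a y = 0}"

definition left_kernel_orth :: "'a set" where
  "left_kernel_orth = {x. \<forall>a\<in>left_kernel. q x a = 0}"

lemma subspace_left_kernel: "subspace left_kernel"
  by (auto simp: subspace_def left_kernel_def p_simps)

lemma subspace_left_kernel_orth: "subspace left_kernel_orth"
  by (auto simp: subspace_def left_kernel_orth_def q_simps)

lemma p_left_kernel: "a \<in> left_kernel \<Longrightarrow> p x a \<in> left_kernel"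
  using p_flat[of x a] torsion_free[of x a] by (simp add: left_kernel_def p_simps)

lemma p_left_kernel_orth:
  assumes "v \<in> left_kernel_orth"
  shows "p x v \<in> left_kernel_orth"
proof -
  have "q (p x v) a = 0" if "a \<in> left_kernel" for a
    using p_metric[of x v a] assms p_left_kernel[OF that, of x] by (simp add: left_kernel_orth_def)
  then show ?thesis
    by (simp add: left_kernel_orth_def)
qed

lemma bracket_left_kernel_orth:
  "x \<in> left_kernel_orth \<Longrightarrow> v \<in> left_kernel_orth \<Longrightarrow> br x v \<in> left_kernel_orth"
  using subspace_left_kernel_orth p_left_kernel_orth
  by (metis torsion_free subspace_diff)

lemma left_kernel_decomposition: "\<exists>v\<in>left_kernel_orth. \<exists>a\<in>left_kernel. x = v + a"
proof -
  obtain G where G: "parseval_frame q left_kernel G"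
    using parseval_frame_exists[OF q_bilinear q_sym subspace_left_kernel] q_pos by blast
  define a where "a = (\<Sum>g\<in>G. q g x *\<^sub>R g)"
  have "a \<in> left_kernel"
    using G subspace_left_kernel
    by (auto simp: a_def parseval_frame_def intro: subspace_sum subspace_scale)
  moreover have "q (x - a) b = 0" if b: "b \<in> left_kernel" for b
  proof -
    have "q x b = q x (\<Sum>g\<in>G. q g b *\<^sub>R g)"
      using parseval_frame_expansion[OF G b] by (rule arg_cong)
    then show ?thesis
      by (simp add: a_def q_simps q_sym bilinear_sum_scaleR_left[OF q_bilinear]
          bilinear_sum_scaleR_right[OF q_bilinear] mult.commute)
  qed
  then have "x - a \<in> left_kernel_orth"
    by (simp add: left_kernel_orth_def)
  ultimately show ?thesis
    by (metis diff_add_cancel)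
qed

text \<open>The Killing-type form \<open>tr (L\<^sub>x\<^sup>* L\<^sub>y)\<close> of the left multiplications \<open>L\<^sub>x = p x\<close>.\<close>
definition trace_form :: "'a \<Rightarrow> 'a \<Rightarrow> real" where
  "trace_form x y = (\<Sum>e\<in>E. q (p x e) (p y e))"

lemma trace_form_bilinear: "bilinear trace_form"
  unfolding bilinear_def trace_form_def
  by (auto intro!: linearI simp: p_simps q_simps sum.distrib sum_distrib_left)

lemma trace_form_sym: "trace_form x y = trace_form y x"
  by (simp add: trace_form_def q_sym)

lemma trace_form_pos:
  assumes "x \<in> left_kernel_orth" "x \<noteq> 0"
  shows "trace_form x x > 0"
proof (rule ccontr)
  assume "\<not> trace_form x x > 0"
  then have "trace_form x x = 0"
    using q_self_nonneg by (smt (verit) sum_nonneg trace_form_def)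
  then have "p x e = 0" if "e \<in> E" for e
    using that frame q_self_nonneg
    by (simp add: trace_form_def parseval_frame_def sum_nonneg_eq_0_iff)
  then have "p x y = 0" for y
    using parseval_frame_linear_eq_0[OF frame bilinear_linear_right[OF p_bilinear]] by blast
  then have "x \<in> left_kernel"
    by (simp add: left_kernel_def)
  then show False
    using assms by (auto simp: left_kernel_orth_def)
qed

text \<open>Flatness says \<open>L\<^bsub>[z,x]\<^esub> = [L\<^sub>z, L\<^sub>x]\<close>; as \<open>L\<^sub>z\<close> is \<open>q\<close>-skew, the trace form
  is \<open>ad\<close>-invariant.\<close>
lemma trace_form_invariant: "trace_form (br z x) y + trace_form x (br z y) = 0"
proof -
  have "(\<Sum>e\<in>E. q (p x (p z e)) (p y e) + q (p x e) (p y (p z e))) = 0"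
  proof (rule parseval_frame_skew_sum[OF q_sym frame])
    show "bilinear (\<lambda>a b. q (p x a) (p y b))"
      unfolding bilinear_def by (auto intro!: linearI simp: p_simps q_simps)
    show "q (p z a) b = - q a (p z b)" for a b
      using p_metric[of z a b] by simp
  qed simp
  moreover have "q (p (br z x) e) (p y e) + q (p x e) (p (br z y) e)
      = - (q (p x (p z e)) (p y e) + q (p x e) (p y (p z e)))" for e
    using p_metric[of z "p x e" "p y e"] by (simp add: p_flat q_simps)
  then have "trace_form (br z x) y + trace_form x (br z y)
      = - (\<Sum>e\<in>E. q (p x (p z e)) (p y e) + q (p x e) (p y (p z e)))"
    unfolding trace_form_def sum.distrib[symmetric] sum_negf[symmetric] by (rule sum.cong[OF refl])
  ultimately show ?thesis
    by simp
qed


context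
  fixes F :: "'a set"
  assumes F: "parseval_frame trace_form left_kernel_orth F"
begin

lemma frame_bracket_sum_eq_0:
  assumes "x \<in> left_kernel_orth"
  shows "(\<Sum>f\<in>F. p (br x f) f + p f (br x f)) = 0"
proof (rule parseval_frame_skew_sum[OF trace_form_sym F _ _ p_bilinear])
  show "br x f \<in> left_kernel_orth" if "f \<in> F" for f
    using that F assms bracket_left_kernel_orth by (auto simp: parseval_frame_def)
  show "trace_form (br x a) b = - trace_form a (br x b)" for a b
    using trace_form_invariant[of x a b] by simp
qed

lemma p_frame_sum:
  assumes "x \<in> left_kernel_orth"
  shows "p x (\<Sum>f\<in>F. p f f) = (\<Sum>f\<in>F. p f (p f x))"
proof -
  have "p x (p f f) = (p (br x f) f + p f (br x f)) + p f (p f x)" for f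
    using p_flat[of x f f] torsion_free[of x f] by (simp add: p_simps algebra_simps)
  then show ?thesis
    using frame_bracket_sum_eq_0[OF assms]
    by (simp add: linear_sum[OF bilinear_linear_right[OF p_bilinear]] sum.distrib[of _ "\<lambda>f. p f (p f x)"])
qed

lemma q_frame_laplacian: "q (\<Sum>f\<in>F. p f (p f y)) y = - (\<Sum>f\<in>F. q (p f y) (p f y))"
proof -
  have "q (p f (p f y)) y = - q (p f y) (p f y)" for f
    using p_metric[of f "p f y" y] by simp
  then show ?thesis
    by (simp add: linear_sum[OF bilinear_linear_left[OF q_bilinear]] sum_negf)
qed

lemma frame_laplacian_null:
  assumes "q (\<Sum>f\<in>F. p f (p f y)) y = 0" "f \<in> F"
  shows "p f y = 0"
  using assms F q_self_nonneg
  by (simp add: q_frame_laplacian parseval_frame_def sum_nonneg_eq_0_iff)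

end

text \<open>Milnor's argument: for \<open>w = \<Sum>\<^sub>f p f f\<close>, \<open>p x w = \<Sum>\<^sub>f p f (p f x)\<close> on the orthogonal
  complement, and \<open>q (\<Sum>\<^sub>f p f (p f y)) y\<close> is minus a sum of squares. Taking \<open>y = w\<close> and then
  \<open>y\<close> arbitrary makes all \<open>p f y\<close> vanish.\<close>
lemma p_left_kernel_orth_eq_0:
  assumes x: "x \<in> left_kernel_orth" and y: "y \<in> left_kernel_orth"
  shows "p x y = 0"
proof -
  obtain F where F: "parseval_frame trace_form left_kernel_orth F"
    using parseval_frame_exists[OF trace_form_bilinear trace_form_sym subspace_left_kernel_orth]
      trace_form_pos by blast
  note p_left_linear = bilinear_linear_left[OF p_bilinear]
  define w where "w = (\<Sum>f\<in>F. p f f)"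
  have "w \<in> left_kernel_orth"
    using F subspace_left_kernel_orth p_left_kernel_orth
    by (auto simp: w_def parseval_frame_def intro: subspace_sum)
  then have "q (\<Sum>f\<in>F. p f (p f w)) w = q (p w w) w"
    by (simp add: p_frame_sum[OF F] w_def)
  then have "p f w = 0" if "f \<in> F" for f
    using frame_laplacian_null[OF F _ that] q_p_self by simp
  then have "p y w = 0"
    using parseval_frame_linear_eq_0[OF F p_left_linear _ y] by blast
  then have "(\<Sum>f\<in>F. p f (p f y)) = 0"
    using p_frame_sum[OF F y] by (simp add: w_def)
  then have "p f y = 0" if "f \<in> F" for f
    using frame_laplacian_null[OF F _ that] by (simp add: q_simps)
  then show ?thesis
    using parseval_frame_linear_eq_0[OF F p_left_linear _ x] by blast
qed

lemma p_p_eq_0: "p (p x y) z = 0"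
proof -
  obtain v a where "v \<in> left_kernel_orth" "a \<in> left_kernel" "x = v + a"
    using left_kernel_decomposition by blast
  moreover obtain v' a' where "v' \<in> left_kernel_orth" "a' \<in> left_kernel" "y = v' + a'"
    using left_kernel_decomposition by blast
  ultimately have "p x y = p v a'" and "p v a' \<in> left_kernel"
    using p_left_kernel_orth_eq_0 p_left_kernel by (auto simp: p_simps left_kernel_def)
  then show ?thesis
    by (simp add: left_kernel_def)
qed

lemma p_bracket_eq_0: "p (br a b) y = 0"
  by (simp add: p_p_eq_0 p_simps flip: torsion_free)

lemma two_solvable: "two_solvable br"
proof -
  have "br (br a b) (br c d) = 0" for a b c d
    using torsion_free[of "br a b" "br c d"] by (simp add: p_bracket_eq_0)
  then show ?thesis
    by (simp add: two_solvable_def)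
qed

lemma trace_p_left: "(\<Sum>b\<in>Basis. p x b \<bullet> b) = 0"
  using q_p_self q_sym
  by (simp add: trace_parseval_frame[OF bilinear_linear_right[OF p_bilinear] q_bilinear frame])

lemma trace_p_right: "(\<Sum>b\<in>Basis. p b x \<bullet> b) = - q (\<Sum>e\<in>E. p e e) x"
proof -
  have "q e (p e x) = - q (p e e) x" for e
    using p_metric[of e e x] by simp
  then show ?thesis
    by (simp add: trace_parseval_frame[OF bilinear_linear_left[OF p_bilinear] q_bilinear frame]
        linear_sum[OF bilinear_linear_left[OF q_bilinear]] sum_negf)
qed

lemma frame_sum_p_self_eq_0: "(\<Sum>e\<in>E. p e e) = 0"
proof -
  have commute: "p b (p e e) = p e (p b e)" for b e
    using p_flat[of b e e] p_bracket_eq_0[of b e e] by simp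
  have "- q (\<Sum>e\<in>E. p e e) (\<Sum>e\<in>E. p e e) = (\<Sum>b\<in>Basis. \<Sum>e\<in>E. p b (p e e) \<bullet> b)"
    by (simp add: trace_p_right[symmetric] linear_sum[OF bilinear_linear_right[OF p_bilinear]]
        inner_sum_left)
  also have "\<dots> = (\<Sum>b\<in>Basis. \<Sum>e\<in>E. p e (p b e) \<bullet> b)"
    by (intro sum.cong refl) (metis commute)
  also have "\<dots> = (\<Sum>e\<in>E. \<Sum>b\<in>Basis. p (p e b) e \<bullet> b)"
    by (subst sum.swap)
      (intro sum.cong refl trace_comp_commute bilinear_linear_left bilinear_linear_right p_bilinear)
  also have "\<dots> = 0"
    by (simp add: p_p_eq_0)
  finally show ?thesis
    by simp
qed

lemma unimodular: "unimodular br"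
proof -
  have "(\<Sum>b\<in>Basis. br x b \<bullet> b) = (\<Sum>b\<in>Basis. p x b \<bullet> b) - (\<Sum>b\<in>Basis. p b x \<bullet> b)" for x
    by (simp add: inner_diff_left sum_subtractf flip: torsion_free)
  then show ?thesis
    by (simp add: unimodular_def trace_p_left trace_p_right frame_sum_p_self_eq_0 q_simps)
qed

text \<open>As \<open>p\<close> vanishes on products, \<open>p (c t)\<close> stays constant along a solution of the linear
  equation \<open>c' = - p c0 c\<close>, which therefore solves the geodesic equation.\<close>
lemma geodesically_complete: "geodesically_complete p"
  unfolding geodesically_complete_def
proof
  fix c0
  obtain c where c: "c 0 = c0" "\<And>t. (c has_vector_derivative - p c0 (c t)) (at t)"
    using linear_ode_solvable[OF linear_compose_neg[OF bilinear_linear_right[OF p_bilinear]]] by blast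
  have "p (c t) y = p (c 0) y" for t y
  proof (rule has_derivative_zero_unique[where s=UNIV, of "\<lambda>s. p (c s) y"])
    fix s
    have "bounded_linear (\<lambda>x. p x y)"
      using bilinear_linear_left[OF p_bilinear] linear_conv_bounded_linear by blast
    from bounded_linear.has_derivative[OF this c(2)[of s, unfolded has_vector_derivative_def]]
    show "((\<lambda>s. p (c s) y) has_derivative (\<lambda>h. 0)) (at s within UNIV)"
      by (simp add: p_simps p_p_eq_0)
  qed auto
  then show "\<exists>c. c 0 = c0 \<and> (\<forall>t. (c has_vector_derivative - p (c t) (c t)) (at t))"
    using c by metis
qed

end

lemma flat_riemannian_flip_timelike:
  assumes m: "lorentzian_form m" and lc: "levi_civita_product br m p" and flat: "flat_product br p"
    and n: "m n n = -1" "\<And>x. p x n = 0"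
  shows "\<exists>E. flat_riemannian (flip_timelike m n) br p E"
proof -
  have q: "bilinear (flip_timelike m n)" "\<And>x y. flip_timelike m n x y = flip_timelike m n y x"
    "\<And>x. x \<noteq> 0 \<Longrightarrow> flip_timelike m n x x > 0"
    using m n by (simp_all add: flip_timelike_bilinear lorentzian_formD flip_timelike_sym
        flip_timelike_pos)
  obtain E where "parseval_frame (flip_timelike m n) UNIV E"
    using parseval_frame_exists[OF q(1,2) subspace_UNIV q(3)] by blast
  moreover have "levi_civita_product br (flip_timelike m n) p"
    using levi_civita_product_flip_timelike[OF lc lorentzian_form_bilinear[OF m] n(2)] .
  ultimately have "flat_riemannian (flip_timelike m n) br p E"
    using q flat by unfold_locales
  then show ?thesis ..
qed

theorem corollary1p2:
  fixes br :: "'a::euclidean_space \<Rightarrow> 'a \<Rightarrow> 'a"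
    and m :: "'a \<Rightarrow> 'a \<Rightarrow> real"
    and p :: "'a \<Rightarrow> 'a \<Rightarrow> 'a"
  assumes "lie_algebra br"
    and "lorentzian_form m"
    and "levi_civita_product br m p"
    and "flat_product br p"
    and "\<exists>u. m u u < 0 \<and> killing_vector m p u"
  shows "two_solvable br \<and> unimodular br \<and> geodesically_complete p"
proof -
  obtain n where "m n n = -1" "\<And>x. p x n = 0"
    using unit_timelike_parallel_exists[OF assms(2-5)] by blast
  then obtain E where "flat_riemannian (flip_timelike m n) br p E"
    using flat_riemannian_flip_timelike[OF assms(2-4)] by blast
  then show ?thesis
    using flat_riemannian.two_solvable flat_riemannian.unimodular
      flat_riemannian.geodesically_complete by blast
qed

end
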